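(* Let $M$ be a graded $R$-module and let $K$, $N$ and $\{K_i\mid i\in I\}$ be graded submodules of $M$. Then: (1) $qp\text{-}V_M^g(0)=qp.Spec_g(M)$ and $qp\text{-}V_M^g(M)=\emptyset$. (2) $\bigcap_{i\in I}qp\text{-}V_M^g(K_i)=qp\text{-}V_M^g\big((\sum_{i\in I}(K_i:_RM))M\big)$. (3) $qp\text{-}V_M^g(N)\cup qp\text{-}V_M^g(K)=qp\text{-}V_M^g(N\cap K)$.
   Context: $G$ is a group with identity $e$, $R=\bigoplus_{g\in G}R_g$ is a $G$-graded commutative ring with identity, $h(R)=\bigcup_{g\in G}R_g$, and $M$ is a graded unital $R$-module with set of homogeneous elements $h(M)$. For a graded ideal $I$ of $R$, $Gr(I)$ is the set of $r=\sum_g r_g\in R$ such that for each $g$ some power $r_g^{n_g}$ lies in $I$; it equals the intersection of all graded prime ideals of $R$ containing $I$. For a submodule $K$ of $M$, $(K:_RM)=\{r\in R: rM\subseteq K\}$. A graded prime submodule of $M$ is a proper graded submodule $P$ such that $r\in h(R)$, $m\in h(M)$, $rm\in P$ imply $m\in P$ or $r\in (P:_RM)$. For a graded submodule $K$, $Gr_M(K)$ is the intersection of all graded prime submodules of $M$ containing $K$ ($Gr_M(K)=M$ if there is none). A graded submodule $K$ satisfies the graded primeful property if for each graded prime ideal $p$ of $R$ with $(K:_RM)\subseteq p$ there is a graded prime submodule $P\supseteq K$ with $(P:_RM)=p$. A graded quasi-primary submodule of $M$ is a proper graded submodule $Q$ such that whenever $r\in h(R)$, $m\in h(M)$, $rm\in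 Q$, then $r\in Gr((Q:_RM))$ or $m\in Gr_M(Q)$. $qp.Spec_g(M)$ denotes the set of all graded quasi-primary submodules of $M$ satisfying the graded primeful property. For a graded submodule $K$ of $M$, $qp\text{-}V_M^g(K)=\{Q\in qp.Spec_g(M)\mid Gr((Q:_RM))\supseteq Gr((K:_RM))\}$. *)

theory Defs
  imports Complex_Main
begin

definition add_subgroup :: "'a::ab_group_add set \<Rightarrow> bool" where
  "add_subgroup A \<longleftrightarrow> 0 \<in> A \<and> (\<forall>x\<in>A. \<forall>y\<in>A. x + y \<in> A) \<and> (\<forall>x\<in>A. - x \<in> A)"

definition is_decomp :: "('g \<Rightarrow> 'a::ab_group_add set) \<Rightarrow> 'a \<Rightarrow> ('g \<Rightarrow> 'a) \<Rightarrow> bool" where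
  "is_decomp A x f \<longleftrightarrow> finite {g. f g \<noteq> 0} \<and> (\<forall>g. f g \<in> A g) \<and> x = (\<Sum>g\<in>{g. f g \<noteq> 0}. f g)"

definition is_dsum :: "('g \<Rightarrow> 'a::ab_group_add set) \<Rightarrow> bool" where
  "is_dsum A \<longleftrightarrow> (\<forall>g. add_subgroup (A g)) \<and> (\<forall>x. \<exists>!f. is_decomp A x f)"

definition gcomp :: "('g \<Rightarrow> 'a::ab_group_add set) \<Rightarrow> 'a \<Rightarrow> 'g \<Rightarrow> 'a" where
  "gcomp A x = (THE f. is_decomp A x f)"

definition hom :: "('g \<Rightarrow> 'a set) \<Rightarrow> 'a set" where
  "hom A = (\<Union>g. A g)"

definition graded_ring :: "('g::group_add \<Rightarrow> 'r::comm_ring_1 set) \<Rightarrow> bool" where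
  "graded_ring Rg \<longleftrightarrow> is_dsum Rg \<and> (\<forall>g h. \<forall>a\<in>Rg g. \<forall>b\<in>Rg h. a * b \<in> Rg (g + h))"

definition graded_module ::
  "('g::group_add \<Rightarrow> 'r::comm_ring_1 set) \<Rightarrow> ('g \<Rightarrow> 'm::ab_group_add set) \<Rightarrow> ('r \<Rightarrow> 'm \<Rightarrow> 'm) \<Rightarrow> bool" where
  "graded_module Rg Mg scale \<longleftrightarrow> module scale \<and> is_dsum Mg \<and>
     (\<forall>g h. \<forall>a\<in>Rg g. \<forall>m\<in>Mg h. scale a m \<in> Mg (g + h))"

definition is_ideal :: "'r::comm_ring_1 set \<Rightarrow> bool" where
  "is_ideal I \<longleftrightarrow> module.subspace ((*)) I"

definition graded_ideal :: "('g \<Rightarrow> 'r::comm_ring_1 set) \<Rightarrow> 'r set \<Rightarrow> bool" where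
  "graded_ideal Rg I \<longleftrightarrow> is_ideal I \<and> (\<forall>x\<in>I. \<forall>g. gcomp Rg x g \<in> I)"

definition graded_prime_ideal :: "('g \<Rightarrow> 'r::comm_ring_1 set) \<Rightarrow> 'r set \<Rightarrow> bool" where
  "graded_prime_ideal Rg p \<longleftrightarrow> graded_ideal Rg p \<and> p \<noteq> UNIV \<and>
     (\<forall>a\<in>hom Rg. \<forall>b\<in>hom Rg. a * b \<in> p \<longrightarrow> a \<in> p \<or> b \<in> p)"

definition graded_submodule ::
  "('g \<Rightarrow> 'm::ab_group_add set) \<Rightarrow> ('r::comm_ring_1 \<Rightarrow> 'm \<Rightarrow> 'm) \<Rightarrow> 'm set \<Rightarrow> bool" where
  "graded_submodule Mg scale N \<longleftrightarrow> module.subspace scale N \<and> (\<forall>x\<in>N. \<forall>g. gcomp Mg x g \<in> N)"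

definition colon :: "('r \<Rightarrow> 'm \<Rightarrow> 'm) \<Rightarrow> 'm set \<Rightarrow> 'r set" where
  "colon scale K = {r. \<forall>m. scale r m \<in> K}"

definition Gr :: "('g \<Rightarrow> 'r::comm_ring_1 set) \<Rightarrow> 'r set \<Rightarrow> 'r set" where
  "Gr Rg I = {r. \<forall>g. \<exists>n>0. (gcomp Rg r g) ^ n \<in> I}"

definition graded_prime_submodule ::
  "('g \<Rightarrow> 'r::comm_ring_1 set) \<Rightarrow> ('g \<Rightarrow> 'm::ab_group_add set) \<Rightarrow> ('r \<Rightarrow> 'm \<Rightarrow> 'm) \<Rightarrow> 'm set \<Rightarrow> bool" where
  "graded_prime_submodule Rg Mg scale P \<longleftrightarrow> graded_submodule Mg scale P \<and> P \<noteq> UNIV \<and>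
     (\<forall>r\<in>hom Rg. \<forall>m\<in>hom Mg. scale r m \<in> P \<longrightarrow> m \<in> P \<or> r \<in> colon scale P)"

definition GrM ::
  "('g \<Rightarrow> 'r::comm_ring_1 set) \<Rightarrow> ('g \<Rightarrow> 'm::ab_group_add set) \<Rightarrow> ('r \<Rightarrow> 'm \<Rightarrow> 'm) \<Rightarrow> 'm set \<Rightarrow> 'm set" where
  "GrM Rg Mg scale K = \<Inter>{P. graded_prime_submodule Rg Mg scale P \<and> K \<subseteq> P}"

definition graded_primeful ::
  "('g \<Rightarrow> 'r::comm_ring_1 set) \<Rightarrow> ('g \<Rightarrow> 'm::ab_group_add set) \<Rightarrow> ('r \<Rightarrow> 'm \<Rightarrow> 'm) \<Rightarrow> 'm set \<Rightarrow> bool" where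
  "graded_primeful Rg Mg scale K \<longleftrightarrow>
     (\<forall>p. graded_prime_ideal Rg p \<and> colon scale K \<subseteq> p \<longrightarrow>
        (\<exists>P. graded_prime_submodule Rg Mg scale P \<and> K \<subseteq> P \<and> colon scale P = p))"

definition graded_quasi_primary ::
  "('g \<Rightarrow> 'r::comm_ring_1 set) \<Rightarrow> ('g \<Rightarrow> 'm::ab_group_add set) \<Rightarrow> ('r \<Rightarrow> 'm \<Rightarrow> 'm) \<Rightarrow> 'm set \<Rightarrow> bool" where
  "graded_quasi_primary Rg Mg scale Q \<longleftrightarrow> graded_submodule Mg scale Q \<and> Q \<noteq> UNIV \<and>
     (\<forall>r\<in>hom Rg. \<forall>m\<in>hom Mg. scale r m \<in> Q \<longrightarrow>
        r \<in> Gr Rg (colon scale Q) \<or> m \<in> GrM Rg Mg scale Q)"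

definition qpSpec ::
  "('g \<Rightarrow> 'r::comm_ring_1 set) \<Rightarrow> ('g \<Rightarrow> 'm::ab_group_add set) \<Rightarrow> ('r \<Rightarrow> 'm \<Rightarrow> 'm) \<Rightarrow> 'm set set" where
  "qpSpec Rg Mg scale = {Q. graded_quasi_primary Rg Mg scale Q \<and> graded_primeful Rg Mg scale Q}"

definition qpV ::
  "('g \<Rightarrow> 'r::comm_ring_1 set) \<Rightarrow> ('g \<Rightarrow> 'm::ab_group_add set) \<Rightarrow> ('r \<Rightarrow> 'm \<Rightarrow> 'm) \<Rightarrow> 'm set \<Rightarrow> 'm set set" where
  "qpV Rg Mg scale K = {Q \<in> qpSpec Rg Mg scale. Gr Rg (colon scale Q) \<supseteq> Gr Rg (colon scale K)}"

definition ideal_sum :: "'i set \<Rightarrow> ('i \<Rightarrow> 'r::comm_ring_1 set) \<Rightarrow> 'r set" where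
  "ideal_sum I J = module.span ((*)) (\<Union>i\<in>I. J i)"

definition ideal_times_module :: "('r::comm_ring_1 \<Rightarrow> 'm::ab_group_add \<Rightarrow> 'm) \<Rightarrow> 'r set \<Rightarrow> 'm set" where
  "ideal_times_module scale J = module.span scale {scale r m | r m. r \<in> J}"

end

(*
  For Q in qp.Spec_g(M) the primeful property lets one test Gr((Q:M)) against graded prime
  submodules: a homogeneous element none of whose powers lies in (Q:M) avoids some prime
  ideal containing (Q:M) (Zorn), hence avoids the graded prime ideal q* below it, and q* is
  (P:M) for a graded prime submodule P containing Q. So for a graded submodule K,
  Gr((K:M)) lies in Gr((Q:M)) iff (K:M) lies in (P:M) for all such P; as (P:M) is an ideal
  and JM lies in P iff J lies in (P:M), this gives (2). For (3), quasi-primariness makes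
  Gr((Q:M)) prime on homogeneous elements, so from x^a in (N:M) and y^b in (K:M) with
  x^a y^b in Gr((Q:M)) one of x, y lies in Gr((Q:M)).
*)

theory Submission
  imports Defs
begin

global_interpretation mult_module: module "(*) :: 'a::comm_ring_1 \<Rightarrow> 'a \<Rightarrow> 'a"
  by unfold_locales (auto simp: algebra_simps)

declare mult_module.scale_scale [simp del] \<comment> \<open>it loops against \<open>mult.assoc\<close>\<close>

lemma is_ideal_iff:
  "is_ideal (J :: 'a::comm_ring_1 set) \<longleftrightarrow>
     0 \<in> J \<and> (\<forall>x\<in>J. \<forall>y\<in>J. x + y \<in> J) \<and> (\<forall>c. \<forall>x\<in>J. c * x \<in> J)"
  unfolding is_ideal_def mult_module.subspace_def by simp

lemma is_ideal_zero: "is_ideal J \<Longrightarrow> 0 \<in> J"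
  and is_ideal_add: "is_ideal J \<Longrightarrow> x \<in> J \<Longrightarrow> y \<in> J \<Longrightarrow> x + y \<in> J"
  and is_ideal_mult: "is_ideal J \<Longrightarrow> x \<in> J \<Longrightarrow> c * x \<in> J"
  by (simp_all add: is_ideal_iff)

lemma is_ideal_Union_chain:
  fixes C :: "'a::comm_ring_1 set set"
  assumes "C \<noteq> {}" and ideals: "\<And>J. J \<in> C \<Longrightarrow> is_ideal J"
    and chain: "\<And>A B. A \<in> C \<Longrightarrow> B \<in> C \<Longrightarrow> A \<subseteq> B \<or> B \<subseteq> A"
  shows "is_ideal (\<Union>C)"
  unfolding is_ideal_iff
proof (intro conjI ballI allI)
  show "0 \<in> \<Union>C" using assms(1) ideals is_ideal_zero by blast
next
  fix a b assume "a \<in> \<Union>C" "b \<in> \<Union>C"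
  then obtain A B where "A \<in> C" "B \<in> C" "a \<in> A" "b \<in> B" by blast
  then consider "a \<in> B" "B \<in> C" | "b \<in> A" "A \<in> C" using chain by blast
  then show "a + b \<in> \<Union>C"
    by cases (use \<open>a \<in> A\<close> \<open>b \<in> B\<close> ideals is_ideal_add in blast)+
next
  fix c a assume "a \<in> \<Union>C"
  then show "c * a \<in> \<Union>C" using ideals is_ideal_mult by blast
qed

lemma ex_prime_ideal_avoiding_powers:
  fixes I :: "'a::comm_ring_1 set"
  assumes "is_ideal I" and "\<forall>n>0. y ^ n \<notin> I"
  shows "\<exists>q. is_ideal q \<and> I \<subseteq> q \<and> (\<forall>n>0. y ^ n \<notin> q) \<and>
    (\<forall>a b. a * b \<in> q \<longrightarrow> a \<in> q \<or> b \<in> q)"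
proof -
  define F where "F = {J. is_ideal J \<and> I \<subseteq> J \<and> (\<forall>n>0. y ^ n \<notin> J)}"
  have "\<exists>q\<in>F. \<forall>J\<in>F. q \<subseteq> J \<longrightarrow> J = q"
  proof (rule subset_Zorn_nonempty)
    show "F \<noteq> {}" using assms unfolding F_def by blast
  next
    fix C assume C: "C \<noteq> {}" "subset.chain F C"
    then have "is_ideal (\<Union>C)"
      by (intro is_ideal_Union_chain) (auto simp: F_def subset.chain_def)
    with C show "\<Union>C \<in> F" by (auto simp: F_def subset.chain_def)
  qed
  then obtain q where "q \<in> F" and maximal: "\<And>J. J \<in> F \<Longrightarrow> q \<subseteq> J \<Longrightarrow> J = q" by blast
  then have q: "is_ideal q" "I \<subseteq> q" "\<forall>n>0. y ^ n \<notin> q" by (auto simp: F_def)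
  have power_in_extension: "\<exists>n>0. \<exists>u r. u \<in> q \<and> y ^ n = u + r * c" if "c \<notin> q" for c
  proof -
    let ?J = "mult_module.span (insert c q)"
    have "is_ideal ?J" "q \<subseteq> ?J" "c \<in> ?J"
      unfolding is_ideal_def by (auto intro: mult_module.span_base)
    with that have "?J \<notin> F" using q(2) maximal by blast
    with \<open>is_ideal ?J\<close> \<open>q \<subseteq> ?J\<close> q(2) obtain n where "n > 0" "y ^ n \<in> ?J"
      unfolding F_def by blast
    moreover have "mult_module.span q = q" using q(1) unfolding is_ideal_def by simp
    ultimately obtain r where "y ^ n - r * c \<in> q"
      unfolding mult_module.span_insert by auto
    then show ?thesis using \<open>n > 0\<close> by (metis diff_add_cancel)
  qed
  have "a \<in> q \<or> b \<in> q" if "a * b \<in> q" for a b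
  proof (rule ccontr)
    assume "\<not> ?thesis"
    then have "a \<notin> q" "b \<notin> q" by simp_all
    obtain i u r where "i > 0" "u \<in> q" and yi: "y ^ i = u + r * a"
      using power_in_extension[OF \<open>a \<notin> q\<close>] by blast
    obtain j v s where "j > 0" "v \<in> q" and yj: "y ^ j = v + s * b"
      using power_in_extension[OF \<open>b \<notin> q\<close>] by blast
    have "y ^ (i + j) = (u + r * a) * (v + s * b)"
      by (simp add: power_add yi yj)
    also have "\<dots> = (v + s * b) * u + (r * a) * v + (r * s) * (a * b)"
      by (simp add: algebra_simps)
    also have "\<dots> \<in> q"
      using q(1) \<open>u \<in> q\<close> \<open>v \<in> q\<close> \<open>a * b \<in> q\<close> by (simp add: is_ideal_add is_ideal_mult)
    finally show False using q(3) \<open>i > 0\<close> by simp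
  qed
  with q show ?thesis by blast
qed

lemma mem_hom_iff: "x \<in> hom A \<longleftrightarrow> (\<exists>d. x \<in> A d)"
  unfolding hom_def by blast

lemma is_decompI:
  assumes "finite T" "{g. f g \<noteq> 0} \<subseteq> T" "\<And>g. f g \<in> A g" "x = sum f T"
  shows "is_decomp A x f"
proof -
  have "sum f T = sum f {g. f g \<noteq> 0}"
    using assms by (intro sum.mono_neutral_right) auto
  then show ?thesis using assms finite_subset unfolding is_decomp_def by auto
qed

lemma gcomp_eqI: "is_dsum A \<Longrightarrow> is_decomp A x f \<Longrightarrow> gcomp A x = f"
  unfolding gcomp_def is_dsum_def by (metis the1_equality)

lemma is_decomp_gcomp: "is_dsum A \<Longrightarrow> is_decomp A x (gcomp A x)"
  unfolding gcomp_def is_dsum_def by (metis theI')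

lemma gcomp_mem: "is_dsum A \<Longrightarrow> gcomp A x g \<in> A g"
  using is_decomp_gcomp unfolding is_decomp_def by blast

lemma finite_gcomp_support: "is_dsum A \<Longrightarrow> finite {g. gcomp A x g \<noteq> 0}"
  using is_decomp_gcomp unfolding is_decomp_def by blast

lemma sum_gcomp_support: "is_dsum A \<Longrightarrow> (\<Sum>g\<in>{g. gcomp A x g \<noteq> 0}. gcomp A x g) = x"
  using is_decomp_gcomp unfolding is_decomp_def by metis

lemma sum_gcomp:
  assumes "is_dsum A" "finite T" "{g. gcomp A x g \<noteq> 0} \<subseteq> T"
  shows "sum (gcomp A x) T = x"
proof -
  have "sum (gcomp A x) T = (\<Sum>g\<in>{g. gcomp A x g \<noteq> 0}. gcomp A x g)"
    using assms(2,3) by (intro sum.mono_neutral_right) auto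
  then show ?thesis using sum_gcomp_support[OF assms(1)] by simp
qed

lemma is_dsum_zero: "is_dsum A \<Longrightarrow> 0 \<in> A g"
  unfolding is_dsum_def add_subgroup_def by blast

lemma gcomp_homogeneous: "is_dsum A \<Longrightarrow> z \<in> A d \<Longrightarrow> gcomp A z = (\<lambda>g. if g = d then z else 0)"
  by (rule gcomp_eqI, assumption, rule is_decompI[where T = "{d}"]) (auto simp: is_dsum_zero)

lemma gcomp_zero: "is_dsum A \<Longrightarrow> gcomp A 0 g = 0"
proof -
  assume "is_dsum A"
  then have "gcomp A 0 = (\<lambda>_. 0)"
    by (intro gcomp_eqI is_decompI[where T = "{}"]) (auto simp: is_dsum_zero)
  then show ?thesis by simp
qed

lemma gcomp_add:
  assumes "is_dsum A"
  shows "gcomp A (x + y) g = gcomp A x g + gcomp A y g"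
proof -
  let ?T = "{g. gcomp A x g \<noteq> 0} \<union> {g. gcomp A y g \<noteq> 0}"
  have "finite ?T" using finite_gcomp_support[OF assms] by blast
  have "gcomp A (x + y) = (\<lambda>g. gcomp A x g + gcomp A y g)"
  proof (rule gcomp_eqI[OF assms], rule is_decompI[where T = ?T])
    show "gcomp A x g + gcomp A y g \<in> A g" for g
      using assms gcomp_mem[OF assms] unfolding is_dsum_def add_subgroup_def by blast
    have "x + y = sum (gcomp A x) ?T + sum (gcomp A y) ?T"
      using sum_gcomp[OF assms \<open>finite ?T\<close>] by auto
    then show "x + y = (\<Sum>g\<in>?T. gcomp A x g + gcomp A y g)"
      by (simp add: sum.distrib)
  qed (use \<open>finite ?T\<close> in auto)
  then show ?thesis by simp
qed

lemma gcomp_sum: "is_dsum A \<Longrightarrow> gcomp A (sum f S) g = (\<Sum>i\<in>S. gcomp A (f i) g)"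
  by (induction S rule: infinite_finite_induct) (auto simp: gcomp_zero gcomp_add)

lemma gcomp_act_homogeneous:
  fixes act :: "'r::ab_group_add \<Rightarrow> 'm::ab_group_add \<Rightarrow> 'm" and h :: "'g::group_add"
  assumes dR: "is_dsum Rg" and dM: "is_dsum Mg"
    and grade: "\<And>g a. a \<in> Rg g \<Longrightarrow> act a m \<in> Mg (g + h)"
    and additive: "\<And>a b. act (a + b) m = act a m + act b m"
  shows "gcomp Mg (act r m) k = act (gcomp Rg r (k - h)) m"
proof -
  interpret additive "\<lambda>a. act a m" by standard (rule additive)
  let ?S = "{g. gcomp Rg r g \<noteq> 0}"
  have "gcomp Mg (act r m) = (\<lambda>k. act (gcomp Rg r (k - h)) m)"
  proof (rule gcomp_eqI[OF dM], rule is_decompI[where T = "(\<lambda>g. g + h) ` ?S"])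
    show "finite ((\<lambda>g. g + h) ` ?S)" using finite_gcomp_support[OF dR] by blast
    show "{k. act (gcomp Rg r (k - h)) m \<noteq> 0} \<subseteq> (\<lambda>g. g + h) ` ?S"
      using zero by (force intro: image_eqI[where x = "_ - h"])
    show "act (gcomp Rg r (k - h)) m \<in> Mg k" for k
      using grade[OF gcomp_mem[OF dR]] by (metis diff_add_cancel)
    have "act r m = (\<Sum>g\<in>?S. act (gcomp Rg r g) m)"
      using sum[of "gcomp Rg r" ?S] sum_gcomp_support[OF dR] by simp
    also have "\<dots> = (\<Sum>k\<in>(\<lambda>g. g + h) ` ?S. act (gcomp Rg r (k - h)) m)"
      by (subst sum.reindex) (auto simp: inj_on_def)
    finally show "act r m = \<dots>" .
  qed
  then show ?thesis by simp
qed

lemma (in module) mem_subspace_if_gcomp: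
  assumes "is_dsum A" "subspace S" "\<And>g. gcomp A x g \<in> S"
  shows "x \<in> S"
  using subspace_sum[OF assms(2), where f = "gcomp A x"] assms(3) sum_gcomp_support[OF assms(1)] by metis

lemma Gr_mono: "I \<subseteq> J \<Longrightarrow> Gr Rg I \<subseteq> Gr Rg J"
  unfolding Gr_def by blast

lemma graded_prime_idealD:
  assumes "graded_prime_ideal Rg p"
  shows "is_ideal p" "p \<noteq> UNIV" "a \<in> hom Rg \<Longrightarrow> b \<in> hom Rg \<Longrightarrow> a * b \<in> p \<Longrightarrow> a \<in> p \<or> b \<in> p"
  using assms unfolding graded_prime_ideal_def graded_ideal_def by blast+

text \<open>For an ideal \<open>q\<close> this is \<open>q\<^sup>*\<close>, the ideal generated by the homogeneous elements of \<open>q\<close>.\<close>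
definition graded_core :: "('g \<Rightarrow> 'r::comm_ring_1 set) \<Rightarrow> 'r set \<Rightarrow> 'r set" where
  "graded_core Rg q = {r. \<forall>g. gcomp Rg r g \<in> q}"

locale graded_comm_ring =
  fixes Rg :: "'g::group_add \<Rightarrow> 'r::comm_ring_1 set"
  assumes graded_ring: "graded_ring Rg"
begin

lemma is_dsum_Rg: "is_dsum Rg"
  using graded_ring unfolding graded_ring_def by blast

lemma mult_mem_grade: "a \<in> Rg g \<Longrightarrow> b \<in> Rg h \<Longrightarrow> a * b \<in> Rg (g + h)"
  using graded_ring unfolding graded_ring_def by blast

lemma gcomp_mult_homogeneous: "b \<in> Rg h \<Longrightarrow> gcomp Rg (a * b) k = gcomp Rg a (k - h) * b"
  by (rule gcomp_act_homogeneous[OF is_dsum_Rg is_dsum_Rg]) (auto intro: mult_mem_grade simp: distrib_right)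

lemma mem_ideal_if_gcomp: "is_ideal J \<Longrightarrow> (\<And>g. gcomp Rg r g \<in> J) \<Longrightarrow> r \<in> J"
  unfolding is_ideal_def by (rule mult_module.mem_subspace_if_gcomp[OF is_dsum_Rg])

lemma one_mem_grade_zero: "1 \<in> Rg 0"
proof -
  let ?e = "gcomp Rg 1"
  have "?e g = 0" if "g \<noteq> 0" for g
  proof -
    have orthogonal: "?e g * ?e h = 0" for h
    proof -
      have "g + h \<noteq> h" using that by (metis add.left_neutral add_right_cancel)
      then have "gcomp Rg (?e h) (g + h) = 0"
        using gcomp_homogeneous[OF is_dsum_Rg gcomp_mem[OF is_dsum_Rg]] by simp
      then show ?thesis
        using gcomp_mult_homogeneous[OF gcomp_mem[OF is_dsum_Rg], where a = 1 and k = "g + h"]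
        by (simp add: add_diff_cancel)
    qed
    have "?e g = ?e g * (\<Sum>h\<in>{h. ?e h \<noteq> 0}. ?e h)"
      by (simp add: sum_gcomp_support[OF is_dsum_Rg])
    also have "\<dots> = 0" by (simp add: sum_distrib_left orthogonal)
    finally show ?thesis .
  qed
  then have "sum ?e {0} = 1" by (intro sum_gcomp[OF is_dsum_Rg]) auto
  then show ?thesis using gcomp_mem[OF is_dsum_Rg, of 1 0] by simp
qed

lemma homogeneous_gcomp: "gcomp Rg r g \<in> hom Rg"
  using gcomp_mem[OF is_dsum_Rg] by (auto simp: mem_hom_iff)

lemma homogeneous_mult: "a \<in> hom Rg \<Longrightarrow> b \<in> hom Rg \<Longrightarrow> a * b \<in> hom Rg"
  unfolding mem_hom_iff using mult_mem_grade by metis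

lemma homogeneous_one: "1 \<in> hom Rg"
  using one_mem_grade_zero by (auto simp: mem_hom_iff)

lemma homogeneous_power: "z \<in> hom Rg \<Longrightarrow> z ^ n \<in> hom Rg"
  by (induction n) (simp_all add: homogeneous_one homogeneous_mult)

lemma Gr_homogeneous_iff:
  assumes "z \<in> hom Rg" "0 \<in> I"
  shows "z \<in> Gr Rg I \<longleftrightarrow> (\<exists>n>0. z ^ n \<in> I)"
proof -
  obtain d where "z \<in> Rg d" using assms(1) by (auto simp: mem_hom_iff)
  then have comp: "gcomp Rg z g = (if g = d then z else 0)" for g
    using gcomp_homogeneous[OF is_dsum_Rg] by simp
  have "\<exists>n>0. (0::'r) ^ n \<in> I" using assms(2) by (intro exI[of _ 1]) simp
  then show ?thesis unfolding Gr_def by (auto simp: comp)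
qed

lemma homogeneous_mem_Gr: "z \<in> hom Rg \<Longrightarrow> 0 \<in> I \<Longrightarrow> z \<in> I \<Longrightarrow> z \<in> Gr Rg I"
  using Gr_homogeneous_iff[of z I] by (metis power_one_right zero_less_one)

lemma Gr_homogeneous_powerD:
  assumes "z \<in> hom Rg" "0 \<in> I" "n > 0" "z ^ n \<in> Gr Rg I"
  shows "z \<in> Gr Rg I"
proof -
  obtain m where "m > 0" "(z ^ n) ^ m \<in> I"
    using assms(2,4) Gr_homogeneous_iff[OF homogeneous_power[OF assms(1)]] by blast
  then have "n * m > 0" "z ^ (n * m) \<in> I" using assms(3) by (simp_all add: power_mult)
  then show ?thesis using Gr_homogeneous_iff[OF assms(1,2)] by blast
qed

lemma Gr_subsetI_homogeneous:
  assumes "0 \<in> I" "0 \<in> J" and homogeneous: "\<And>z. z \<in> hom Rg \<Longrightarrow> z \<in> Gr Rg I \<Longrightarrow> z \<in> Gr Rg J"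
  shows "Gr Rg I \<subseteq> Gr Rg J"
proof
  fix r assume "r \<in> Gr Rg I"
  then have "\<exists>n>0. gcomp Rg r g ^ n \<in> I" for g unfolding Gr_def by blast
  then have "gcomp Rg r g \<in> Gr Rg J" for g
    using homogeneous homogeneous_gcomp Gr_homogeneous_iff[OF homogeneous_gcomp assms(1)] by blast
  then have "\<exists>n>0. gcomp Rg r g ^ n \<in> J" for g
    using Gr_homogeneous_iff[OF homogeneous_gcomp assms(2)] by blast
  then show "r \<in> Gr Rg J" unfolding Gr_def by blast
qed

lemma graded_prime_ideal_power_mem:
  assumes p: "graded_prime_ideal Rg p" and z: "z \<in> hom Rg" and "z ^ n \<in> p"
  shows "z \<in> p"
  using assms(3)
proof (induction n)
  case 0
  then have "c \<in> p" for c using is_ideal_mult[OF graded_prime_idealD(1)[OF p], of 1 c] by simp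
  then show ?case using graded_prime_idealD(2)[OF p] by auto
next
  case (Suc n)
  then show ?case using graded_prime_idealD(3)[OF p z homogeneous_power[OF z]] by auto
qed

lemma graded_ideal_subset_Gr:
  assumes "graded_ideal Rg I"
  shows "I \<subseteq> Gr Rg I"
proof
  fix r assume "r \<in> I"
  then have "gcomp Rg r g ^ 1 \<in> I" for g using assms unfolding graded_ideal_def by simp
  then show "r \<in> Gr Rg I" unfolding Gr_def using zero_less_one by blast
qed

lemma Gr_subset_graded_prime_ideal:
  assumes p: "graded_prime_ideal Rg p" and "I \<subseteq> p"
  shows "Gr Rg I \<subseteq> p"
proof
  fix r assume r: "r \<in> Gr Rg I"
  have "gcomp Rg r g \<in> p" for g
  proof -
    obtain n where "gcomp Rg r g ^ n \<in> p" using r assms(2) unfolding Gr_def by blast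
    then show ?thesis using graded_prime_ideal_power_mem[OF p homogeneous_gcomp] by blast
  qed
  then show "r \<in> p" using mem_ideal_if_gcomp graded_prime_idealD(1)[OF p] by blast
qed

lemma graded_core_homogeneous_iff:
  assumes "0 \<in> q" "z \<in> hom Rg"
  shows "z \<in> graded_core Rg q \<longleftrightarrow> z \<in> q"
proof -
  obtain d where "z \<in> Rg d" using assms(2) by (auto simp: mem_hom_iff)
  then show ?thesis
    using assms(1) gcomp_homogeneous[OF is_dsum_Rg] unfolding graded_core_def by auto
qed

lemma gcomp_graded_core:
  assumes "0 \<in> q" "r \<in> graded_core Rg q"
  shows "gcomp Rg r g \<in> graded_core Rg q"
proof -
  have "gcomp Rg r g \<in> q" using assms(2) by (simp add: graded_core_def)
  then show ?thesis using graded_core_homogeneous_iff[OF assms(1) homogeneous_gcomp] by blast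
qed

lemma is_ideal_graded_core:
  assumes q: "is_ideal q"
  shows "is_ideal (graded_core Rg q)"
  unfolding is_ideal_iff
proof (intro conjI ballI allI)
  show "0 \<in> graded_core Rg q"
    by (simp add: graded_core_def gcomp_zero[OF is_dsum_Rg] is_ideal_zero[OF q])
next
  fix a b assume "a \<in> graded_core Rg q" "b \<in> graded_core Rg q"
  then show "a + b \<in> graded_core Rg q"
    by (simp add: graded_core_def gcomp_add[OF is_dsum_Rg] is_ideal_add[OF q])
next
  fix c r assume r: "r \<in> graded_core Rg q"
  have "gcomp Rg (c * r) g \<in> q" for g
  proof -
    let ?S = "{h. gcomp Rg r h \<noteq> 0}"
    have "c * r = (\<Sum>h\<in>?S. c * gcomp Rg r h)"
      by (simp add: sum_distrib_left[symmetric] sum_gcomp_support[OF is_dsum_Rg])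
    then have "gcomp Rg (c * r) g = (\<Sum>h\<in>?S. gcomp Rg c (g - h) * gcomp Rg r h)"
      by (simp add: gcomp_sum[OF is_dsum_Rg] gcomp_mult_homogeneous[OF gcomp_mem[OF is_dsum_Rg]])
    also have "\<dots> \<in> q"
      using r q unfolding graded_core_def is_ideal_def
      by (intro mult_module.subspace_sum mult_module.subspace_scale) auto
    finally show ?thesis .
  qed
  then show "c * r \<in> graded_core Rg q" unfolding graded_core_def by blast
qed

lemma graded_prime_ideal_graded_core:
  assumes q: "is_ideal q" "q \<noteq> UNIV" and prime: "\<And>a b. a * b \<in> q \<Longrightarrow> a \<in> q \<or> b \<in> q"
  shows "graded_prime_ideal Rg (graded_core Rg q)"
proof -
  note core_iff = graded_core_homogeneous_iff[OF is_ideal_zero[OF q(1)]]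
  have "1 \<notin> q" using q is_ideal_mult[OF q(1), of 1] by auto
  then have proper: "graded_core Rg q \<noteq> UNIV" using core_iff[OF homogeneous_one] by blast
  have homogeneous_prime: "a \<in> graded_core Rg q \<or> b \<in> graded_core Rg q"
    if "a \<in> hom Rg" "b \<in> hom Rg" "a * b \<in> graded_core Rg q" for a b
  proof -
    have "a * b \<in> q" using that(3) core_iff[OF homogeneous_mult[OF that(1,2)]] by blast
    then show ?thesis using prime core_iff[OF that(1)] core_iff[OF that(2)] by blast
  qed
  show ?thesis
    unfolding graded_prime_ideal_def graded_ideal_def
    using is_ideal_graded_core[OF q(1)] gcomp_graded_core[OF is_ideal_zero[OF q(1)]]
      proper homogeneous_prime by blast
qed

lemma ex_graded_prime_ideal_avoiding:
  assumes I: "graded_ideal Rg I" and y: "y \<in> hom Rg" "y \<notin> Gr Rg I"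
  shows "\<exists>p. graded_prime_ideal Rg p \<and> I \<subseteq> p \<and> y \<notin> p"
proof -
  have "is_ideal I" using I unfolding graded_ideal_def by blast
  moreover have "\<forall>n>0. y ^ n \<notin> I"
    using y Gr_homogeneous_iff[OF y(1) is_ideal_zero[OF \<open>is_ideal I\<close>]] by blast
  ultimately obtain q where q: "is_ideal q" "I \<subseteq> q" "\<forall>n>0. y ^ n \<notin> q"
    and prime: "\<forall>a b. a * b \<in> q \<longrightarrow> a \<in> q \<or> b \<in> q"
    using ex_prime_ideal_avoiding_powers by blast
  have "y \<notin> q" using q(3) by (metis power_one_right zero_less_one)
  then have "q \<noteq> UNIV" "y \<notin> graded_core Rg q"
    using graded_core_homogeneous_iff[OF is_ideal_zero[OF q(1)] y(1)] by auto
  moreover have "I \<subseteq> graded_core Rg q"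
    using I q(2) unfolding graded_ideal_def graded_core_def by blast
  ultimately show ?thesis using graded_prime_ideal_graded_core[OF q(1) \<open>q \<noteq> UNIV\<close>] prime by blast
qed

end

lemma colon_mono: "K \<subseteq> L \<Longrightarrow> colon scale K \<subseteq> colon scale L"
  unfolding colon_def by blast

lemma colon_Int: "colon scale (N \<inter> K) = colon scale N \<inter> colon scale K"
  unfolding colon_def by blast

lemma colon_UNIV: "colon scale UNIV = UNIV"
  unfolding colon_def by blast

lemma subset_ideal_sum: "i \<in> I \<Longrightarrow> J i \<subseteq> ideal_sum I J"
  unfolding ideal_sum_def using mult_module.span_superset by blast

lemma ideal_sum_subset: "is_ideal A \<Longrightarrow> (\<And>i. i \<in> I \<Longrightarrow> J i \<subseteq> A) \<Longrightarrow> ideal_sum I J \<subseteq> A"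
  unfolding ideal_sum_def is_ideal_def by (intro mult_module.span_minimal) auto

context module
begin

lemma is_ideal_colon:
  assumes "subspace K"
  shows "is_ideal (colon scale K)"
  unfolding is_ideal_iff colon_def
proof (intro conjI ballI allI CollectI)
  show "0 *s m \<in> K" for m using subspace_0[OF assms] by simp
  show "(x + y) *s m \<in> K" if "x \<in> {r. \<forall>m. r *s m \<in> K}" "y \<in> {r. \<forall>m. r *s m \<in> K}" for x y m
    using that subspace_add[OF assms] by (simp add: scale_left_distrib)
  show "(c * x) *s m \<in> K" if "x \<in> {r. \<forall>m. r *s m \<in> K}" for c x m
    using that subspace_scale[OF assms] by (simp flip: scale_scale)
qed

lemma subspace_scale_preimage:
  assumes "subspace K"
  shows "subspace {m. y *s m \<in> K}"
proof -
  have "y *s (c *s x) \<in> K" if "y *s x \<in> K" for c x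
    using subspace_scale[OF assms that, of c] by (simp add: mult.commute)
  then show ?thesis
    unfolding subspace_def using subspace_0[OF assms] subspace_add[OF assms]
    by (auto simp: scale_right_distrib simp del: scale_scale)
qed

lemma ideal_times_module_subset:
  "subspace P \<Longrightarrow> J \<subseteq> colon scale P \<Longrightarrow> ideal_times_module scale J \<subseteq> P"
  unfolding ideal_times_module_def colon_def by (intro span_minimal) auto

lemma subset_colon_ideal_times_module: "J \<subseteq> colon scale (ideal_times_module scale J)"
  unfolding ideal_times_module_def colon_def by (blast intro: span_base)

end

locale graded_ring_module = graded_comm_ring Rg
  for Rg :: "'g::group_add \<Rightarrow> 'r::comm_ring_1 set" +
  fixes Mg :: "'g \<Rightarrow> 'm::ab_group_add set" and scale :: "'r \<Rightarrow> 'm \<Rightarrow> 'm"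
  assumes graded_module: "graded_module Rg Mg scale"
begin

sublocale M: module scale
  using graded_module unfolding graded_module_def by blast

lemma is_dsum_Mg: "is_dsum Mg"
  using graded_module unfolding graded_module_def by blast

lemma scale_mem_grade: "a \<in> Rg g \<Longrightarrow> m \<in> Mg h \<Longrightarrow> scale a m \<in> Mg (g + h)"
  using graded_module unfolding graded_module_def by blast

lemma homogeneous_scale: "a \<in> hom Rg \<Longrightarrow> m \<in> hom Mg \<Longrightarrow> scale a m \<in> hom Mg"
  unfolding mem_hom_iff using scale_mem_grade by metis

lemma gcomp_scale_homogeneous: "m \<in> Mg h \<Longrightarrow> gcomp Mg (scale r m) k = scale (gcomp Rg r (k - h)) m"
  by (rule gcomp_act_homogeneous[OF is_dsum_Rg is_dsum_Mg])
    (auto intro: scale_mem_grade simp: M.scale_left_distrib)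

lemma mem_colon_if_homogeneous:
  assumes "M.subspace K" "\<And>m. m \<in> hom Mg \<Longrightarrow> scale y m \<in> K"
  shows "y \<in> colon scale K"
proof -
  have "m \<in> {m. scale y m \<in> K}" for m
  proof (rule M.mem_subspace_if_gcomp[OF is_dsum_Mg M.subspace_scale_preimage[OF assms(1)]])
    show "gcomp Mg m g \<in> {m. scale y m \<in> K}" for g
      using assms(2) gcomp_mem[OF is_dsum_Mg] by (auto simp: mem_hom_iff)
  qed
  then show ?thesis unfolding colon_def by blast
qed

lemma gcomp_colon:
  assumes K: "graded_submodule Mg scale K" and r: "r \<in> colon scale K"
  shows "gcomp Rg r g \<in> colon scale K"
proof (rule mem_colon_if_homogeneous)
  show "M.subspace K" using K unfolding graded_submodule_def by blast
  fix m assume "m \<in> hom Mg"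
  then obtain h where "m \<in> Mg h" by (auto simp: mem_hom_iff)
  then have "scale (gcomp Rg r g) m = gcomp Mg (scale r m) (g + h)"
    by (simp add: gcomp_scale_homogeneous add_diff_cancel)
  also have "\<dots> \<in> K" using K r unfolding graded_submodule_def colon_def by blast
  finally show "scale (gcomp Rg r g) m \<in> K" .
qed

lemma graded_ideal_colon: "graded_submodule Mg scale K \<Longrightarrow> graded_ideal Rg (colon scale K)"
  unfolding graded_ideal_def graded_submodule_def
  using M.is_ideal_colon gcomp_colon[unfolded graded_submodule_def] by blast

lemma zero_mem_colon: "M.subspace K \<Longrightarrow> 0 \<in> colon scale K"
  by (rule is_ideal_zero[OF M.is_ideal_colon])

lemma graded_prime_ideal_colon:
  assumes P: "graded_prime_submodule Rg Mg scale P"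
  shows "graded_prime_ideal Rg (colon scale P)"
proof -
  have sub: "graded_submodule Mg scale P" and "P \<noteq> UNIV"
    and prime: "\<And>r m. r \<in> hom Rg \<Longrightarrow> m \<in> hom Mg \<Longrightarrow> scale r m \<in> P \<Longrightarrow>
      m \<in> P \<or> r \<in> colon scale P"
    using P unfolding graded_prime_submodule_def by blast+
  have "M.subspace P" using sub unfolding graded_submodule_def by blast
  have "1 \<notin> colon scale P" using \<open>P \<noteq> UNIV\<close> unfolding colon_def by auto
  moreover have "a \<in> colon scale P \<or> b \<in> colon scale P"
    if a: "a \<in> hom Rg" and b: "b \<in> hom Rg" and ab: "a * b \<in> colon scale P" for a b
  proof (rule disjCI)
    assume "b \<notin> colon scale P"
    then obtain m where m: "m \<in> hom Mg" "scale b m \<notin> P"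
      using mem_colon_if_homogeneous[OF \<open>M.subspace P\<close>] by blast
    have "scale a (scale b m) \<in> P" using ab unfolding colon_def by simp
    then show "a \<in> colon scale P" using prime[OF a homogeneous_scale[OF b m(1)]] m(2) by blast
  qed
  ultimately show ?thesis
    using graded_ideal_colon[OF sub] unfolding graded_prime_ideal_def by blast
qed

lemma ex_graded_prime_submodule_avoiding:
  assumes "graded_submodule Mg scale Q" "graded_primeful Rg Mg scale Q"
    and "y \<in> hom Rg" "y \<notin> Gr Rg (colon scale Q)"
  shows "\<exists>P. graded_prime_submodule Rg Mg scale P \<and> Q \<subseteq> P \<and> y \<notin> colon scale P"
proof -
  obtain p where "graded_prime_ideal Rg p" "colon scale Q \<subseteq> p" "y \<notin> p"
    using ex_graded_prime_ideal_avoiding[OF graded_ideal_colon] assms(1,3,4) by blast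
  then show ?thesis using assms(2) unfolding graded_primeful_def by blast
qed

lemma colon_subset_colon_prime:
  assumes K: "graded_submodule Mg scale K" and Gr_subset: "Gr Rg (colon scale K) \<subseteq> Gr Rg (colon scale Q)"
    and P: "graded_prime_submodule Rg Mg scale P" "Q \<subseteq> P"
  shows "colon scale K \<subseteq> colon scale P"
proof -
  have "colon scale K \<subseteq> Gr Rg (colon scale K)"
    by (rule graded_ideal_subset_Gr[OF graded_ideal_colon[OF K]])
  also note Gr_subset
  also have "Gr Rg (colon scale Q) \<subseteq> colon scale P"
    by (rule Gr_subset_graded_prime_ideal[OF graded_prime_ideal_colon[OF P(1)] colon_mono[OF P(2)]])
  finally show ?thesis .
qed

lemma Gr_subset_Gr_colon_if_primes:
  assumes "graded_submodule Mg scale Q" "graded_primeful Rg Mg scale Q"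
    and primes: "\<And>P. graded_prime_submodule Rg Mg scale P \<Longrightarrow> Q \<subseteq> P \<Longrightarrow> I \<subseteq> colon scale P"
  shows "Gr Rg I \<subseteq> Gr Rg (colon scale Q)"
proof
  fix r assume r: "r \<in> Gr Rg I"
  have "\<exists>n>0. gcomp Rg r g ^ n \<in> colon scale Q" for g
  proof (rule ccontr)
    let ?x = "gcomp Rg r g"
    have "0 \<in> colon scale Q"
      using graded_ideal_colon[OF assms(1)] is_ideal_zero unfolding graded_ideal_def by blast
    moreover assume "\<not> (\<exists>n>0. ?x ^ n \<in> colon scale Q)"
    ultimately have "?x \<notin> Gr Rg (colon scale Q)" using Gr_homogeneous_iff[OF homogeneous_gcomp] by blast
    then obtain P where P: "graded_prime_submodule Rg Mg scale P" "Q \<subseteq> P" "?x \<notin> colon scale P"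
      using ex_graded_prime_submodule_avoiding[OF assms(1,2) homogeneous_gcomp] by blast
    obtain n where "?x ^ n \<in> I" using r unfolding Gr_def by blast
    then have "?x ^ n \<in> colon scale P" using primes[OF P(1,2)] by blast
    then show False
      using graded_prime_ideal_power_mem[OF graded_prime_ideal_colon[OF P(1)] homogeneous_gcomp] P(3)
      by blast
  qed
  then show "r \<in> Gr Rg (colon scale Q)" unfolding Gr_def by blast
qed

lemma quasi_primary_colon_homogeneous_prime:
  assumes Q: "graded_quasi_primary Rg Mg scale Q" "graded_primeful Rg Mg scale Q"
    and x: "x \<in> hom Rg" and y: "y \<in> hom Rg" and xy: "x * y \<in> colon scale Q"
  shows "x \<in> Gr Rg (colon scale Q) \<or> y \<in> Gr Rg (colon scale Q)"
proof (rule disjCI)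
  assume y_notin: "y \<notin> Gr Rg (colon scale Q)"
  have sub: "graded_submodule Mg scale Q"
    and quasi_primary: "\<And>r m. r \<in> hom Rg \<Longrightarrow> m \<in> hom Mg \<Longrightarrow> scale r m \<in> Q \<Longrightarrow>
      r \<in> Gr Rg (colon scale Q) \<or> m \<in> GrM Rg Mg scale Q"
    using Q(1) unfolding graded_quasi_primary_def by blast+
  obtain P where P: "graded_prime_submodule Rg Mg scale P" "Q \<subseteq> P" "y \<notin> colon scale P"
    using ex_graded_prime_submodule_avoiding[OF sub Q(2) y y_notin] by blast
  show "x \<in> Gr Rg (colon scale Q)"
  proof (rule ccontr)
    assume x_notin: "x \<notin> Gr Rg (colon scale Q)"
    have "scale y m \<in> P" if "m \<in> hom Mg" for m
    proof -
      have "scale x (scale y m) \<in> Q" using xy unfolding colon_def by simp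
      then have "scale y m \<in> GrM Rg Mg scale Q"
        using quasi_primary[OF x homogeneous_scale[OF y that]] x_notin by blast
      then show ?thesis using P(1,2) unfolding GrM_def by blast
    qed
    moreover have "M.subspace P"
      using P(1) unfolding graded_prime_submodule_def graded_submodule_def by blast
    ultimately show False using mem_colon_if_homogeneous P(3) by blast
  qed
qed

lemma qpSpecD:
  assumes "Q \<in> qpSpec Rg Mg scale"
  shows "graded_quasi_primary Rg Mg scale Q" "graded_primeful Rg Mg scale Q"
    "graded_submodule Mg scale Q" "Q \<noteq> UNIV" "0 \<in> colon scale Q"
  using assms graded_ideal_colon is_ideal_zero
  unfolding qpSpec_def graded_quasi_primary_def graded_ideal_def by blast+

lemma qpSpec_Gr_colon_homogeneous_prime:
  assumes Q: "Q \<in> qpSpec Rg Mg scale"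
    and x: "x \<in> hom Rg" and y: "y \<in> hom Rg" and xy: "x * y \<in> Gr Rg (colon scale Q)"
  shows "x \<in> Gr Rg (colon scale Q) \<or> y \<in> Gr Rg (colon scale Q)"
proof -
  obtain n where "n > 0" "(x * y) ^ n \<in> colon scale Q"
    using xy Gr_homogeneous_iff[OF homogeneous_mult[OF x y] qpSpecD(5)[OF Q]] by blast
  then have "x ^ n \<in> Gr Rg (colon scale Q) \<or> y ^ n \<in> Gr Rg (colon scale Q)"
    using quasi_primary_colon_homogeneous_prime[OF qpSpecD(1,2)[OF Q]
        homogeneous_power[OF x] homogeneous_power[OF y]]
    by (simp add: power_mult_distrib)
  then show ?thesis
    using Gr_homogeneous_powerD[OF _ qpSpecD(5)[OF Q] \<open>n > 0\<close>] x y by blast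
qed

lemma Gr_colon_Int_subsetD:
  assumes Q: "Q \<in> qpSpec Rg Mg scale" and N: "M.subspace N" and K: "M.subspace K"
    and Int_subset: "Gr Rg (colon scale (N \<inter> K)) \<subseteq> Gr Rg (colon scale Q)"
  shows "Gr Rg (colon scale N) \<subseteq> Gr Rg (colon scale Q) \<or> Gr Rg (colon scale K) \<subseteq> Gr Rg (colon scale Q)"
proof (rule ccontr)
  note zero = zero_mem_colon[OF N] zero_mem_colon[OF K] qpSpecD(5)[OF Q]
  assume "\<not> ?thesis"
  then have "\<not> Gr Rg (colon scale N) \<subseteq> Gr Rg (colon scale Q)"
    "\<not> Gr Rg (colon scale K) \<subseteq> Gr Rg (colon scale Q)" by simp_all
  then obtain x y where x: "x \<in> hom Rg" "x \<in> Gr Rg (colon scale N)" "x \<notin> Gr Rg (colon scale Q)"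
    and y: "y \<in> hom Rg" "y \<in> Gr Rg (colon scale K)" "y \<notin> Gr Rg (colon scale Q)"
    using Gr_subsetI_homogeneous[OF zero(1,3)] Gr_subsetI_homogeneous[OF zero(2,3)] by blast
  obtain a where "a > 0" "x ^ a \<in> colon scale N" using Gr_homogeneous_iff[OF x(1) zero(1)] x(2) by blast
  obtain b where "b > 0" "y ^ b \<in> colon scale K" using Gr_homogeneous_iff[OF y(1) zero(2)] y(2) by blast
  have "x ^ a * y ^ b \<in> colon scale N"
    using is_ideal_mult[OF M.is_ideal_colon[OF N] \<open>x ^ a \<in> colon scale N\<close>, of "y ^ b"]
    by (simp add: mult.commute)
  moreover have "x ^ a * y ^ b \<in> colon scale K"
    using is_ideal_mult[OF M.is_ideal_colon[OF K] \<open>y ^ b \<in> colon scale K\<close>] .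
  ultimately have "x ^ a * y ^ b \<in> Gr Rg (colon scale (N \<inter> K))"
    using zero_mem_colon[OF M.subspace_inter[OF N K]]
    by (intro homogeneous_mem_Gr homogeneous_mult homogeneous_power x(1) y(1)) (auto simp: colon_Int)
  then have "x ^ a \<in> Gr Rg (colon scale Q) \<or> y ^ b \<in> Gr Rg (colon scale Q)"
    using Int_subset qpSpec_Gr_colon_homogeneous_prime[OF Q homogeneous_power[OF x(1)]
        homogeneous_power[OF y(1)]] by blast
  then show False
    using Gr_homogeneous_powerD[OF x(1) zero(3) \<open>a > 0\<close>]
      Gr_homogeneous_powerD[OF y(1) zero(3) \<open>b > 0\<close>] x(3) y(3) by blast
qed

lemma qpV_zero: "qpV Rg Mg scale {0} = qpSpec Rg Mg scale"
proof -
  have "Gr Rg (colon scale {0}) \<subseteq> Gr Rg (colon scale Q)" if "Q \<in> qpSpec Rg Mg scale" for Q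
    using qpSpecD(3)[OF that] M.subspace_0
    by (intro Gr_mono colon_mono) (auto simp: graded_submodule_def)
  then show ?thesis unfolding qpV_def by blast
qed

lemma qpV_UNIV: "qpV Rg Mg scale UNIV = {}"
proof -
  have "1 \<in> Gr Rg (colon scale UNIV)"
    using Gr_homogeneous_iff[OF homogeneous_one UNIV_I] zero_less_one by (auto simp: colon_UNIV)
  moreover have "1 \<notin> Gr Rg (colon scale Q)" if "Q \<in> qpSpec Rg Mg scale" for Q
    using qpSpecD(4,5)[OF that] Gr_homogeneous_iff[OF homogeneous_one] unfolding colon_def by auto
  ultimately show ?thesis unfolding qpV_def by blast
qed

lemma INT_qpV:
  assumes Ks: "\<forall>i\<in>I. graded_submodule Mg scale (Ks i)"
  shows "qpSpec Rg Mg scale \<inter> (\<Inter>i\<in>I. qpV Rg Mg scale (Ks i))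
    = qpV Rg Mg scale (ideal_times_module scale (ideal_sum I (\<lambda>i. colon scale (Ks i))))"
    (is "_ = qpV Rg Mg scale ?JM")
proof -
  let ?J = "ideal_sum I (\<lambda>i. colon scale (Ks i))"
  have "colon scale (Ks i) \<subseteq> colon scale ?JM" if "i \<in> I" for i
    using subset_ideal_sum[OF that, of "\<lambda>i. colon scale (Ks i)"]
      M.subset_colon_ideal_times_module[of ?J] by simp
  then have Ks_le: "Gr Rg (colon scale (Ks i)) \<subseteq> Gr Rg (colon scale ?JM)" if "i \<in> I" for i
    using that by (simp add: Gr_mono)
  have JM_le: "Gr Rg (colon scale ?JM) \<subseteq> Gr Rg (colon scale Q)"
    if Q: "Q \<in> qpSpec Rg Mg scale"
      and Gr_subset: "\<And>i. i \<in> I \<Longrightarrow> Gr Rg (colon scale (Ks i)) \<subseteq> Gr Rg (colon scale Q)" for Q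
  proof (rule Gr_subset_Gr_colon_if_primes[OF qpSpecD(3,2)[OF Q]])
    fix P assume P: "graded_prime_submodule Rg Mg scale P" "Q \<subseteq> P"
    have "?J \<subseteq> colon scale P"
    proof (rule ideal_sum_subset)
      show "is_ideal (colon scale P)"
        by (rule graded_prime_idealD(1)[OF graded_prime_ideal_colon[OF P(1)]])
      show "colon scale (Ks i) \<subseteq> colon scale P" if "i \<in> I" for i
        using colon_subset_colon_prime[OF Ks[rule_format, OF that] Gr_subset[OF that] P] .
    qed
    moreover have "M.subspace P"
      using P(1) unfolding graded_prime_submodule_def graded_submodule_def by blast
    ultimately have "?JM \<subseteq> P" by (intro M.ideal_times_module_subset)
    then show "colon scale ?JM \<subseteq> colon scale P" by (rule colon_mono)
  qed
  show ?thesis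
  proof (intro equalityI subsetI)
    fix Q assume "Q \<in> qpSpec Rg Mg scale \<inter> (\<Inter>i\<in>I. qpV Rg Mg scale (Ks i))"
    then show "Q \<in> qpV Rg Mg scale ?JM" using JM_le unfolding qpV_def by auto
  next
    fix Q assume "Q \<in> qpV Rg Mg scale ?JM"
    then show "Q \<in> qpSpec Rg Mg scale \<inter> (\<Inter>i\<in>I. qpV Rg Mg scale (Ks i))"
      using Ks_le unfolding qpV_def by auto
  qed
qed

lemma Un_qpV:
  assumes "M.subspace N" "M.subspace K"
  shows "qpV Rg Mg scale N \<union> qpV Rg Mg scale K = qpV Rg Mg scale (N \<inter> K)"
proof -
  have "Gr Rg (colon scale (N \<inter> K)) \<subseteq> Gr Rg (colon scale N)"
    "Gr Rg (colon scale (N \<inter> K)) \<subseteq> Gr Rg (colon scale K)"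
    by (intro Gr_mono colon_mono; blast)+
  then show ?thesis
    using Gr_colon_Int_subsetD[OF _ assms] unfolding qpV_def by blast
qed

end

theorem theorem3p1:
  fixes Rg :: "'g::group_add \<Rightarrow> 'r::comm_ring_1 set"
    and Mg :: "'g \<Rightarrow> 'm::ab_group_add set"
    and scale :: "'r \<Rightarrow> 'm \<Rightarrow> 'm"
    and K N :: "'m set"
    and I :: "'i set"
    and Ks :: "'i \<Rightarrow> 'm set"
  assumes "graded_ring Rg"
    and "graded_module Rg Mg scale"
    and "graded_submodule Mg scale K"
    and "graded_submodule Mg scale N"
    and "\<forall>i\<in>I. graded_submodule Mg scale (Ks i)"
  shows "qpV Rg Mg scale {0} = qpSpec Rg Mg scale
    \<and> qpV Rg Mg scale UNIV = {}
    \<and> qpSpec Rg Mg scale \<inter> (\<Inter>i\<in>I. qpV Rg Mg scale (Ks i))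
        = qpV Rg Mg scale (ideal_times_module scale (ideal_sum I (\<lambda>i. colon scale (Ks i))))
    \<and> qpV Rg Mg scale N \<union> qpV Rg Mg scale K = qpV Rg Mg scale (N \<inter> K)"
proof -
  interpret graded_ring_module Rg Mg scale
    using assms(1,2) by unfold_locales
  have "M.subspace N" "M.subspace K"
    using assms(3,4) unfolding graded_submodule_def by blast+
  then show ?thesis using qpV_zero qpV_UNIV INT_qpV[OF assms(5)] Un_qpV by blast
qed

end
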